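(* Let $N>2$, $1<p<N$, and assume (H1)–(H4). For $a>0$ let $v_a$ be the solution on $[0,T]$ of $$(|v'(t)|^{p-2}v'(t))'+h(t)f(v(t))=0,\qquad v(0)=0,\ v'(0)=a.$$ For each sufficiently large $a$ let $z_a\in(0,T)$ be any zero of $v_a$ (so $v_a(z_a)=0$). Then $|v_a'(z_a)|\to\infty$ as $a\to\infty$; equivalently, $\inf\{|v_a'(z)|: z\in(0,T),\ v_a(z)=0\}\to\infty$ as $a\to\infty$.
   Context: Standing hypotheses. $f:\mathbb{R}\setminus\{0\}\to\mathbb{R}$ is odd and locally Lipschitz, and: (H1) there is a locally Lipschitz $g_1:\mathbb{R}\to\mathbb{R}$ and $l>p-1$ with $f(u)=|u|^{l-1}u+g_1(u)$ for all large $|u|$, and $\lim_{u\to\infty}|g_1(u)|/|u|^l=0$; (H2) there is a locally Lipschitz $g_2:\mathbb{R}\to\mathbb{R}$ with $g_2(0)=0$ and $0<m<1$ such that $f(u)=-\frac{1}{|u|^{m-1}u}+g_2(u)$ for all small $|u|\neq 0$; (H3) $f$ has a unique positive zero $\beta$, with $f<0$ on $(0,\beta)$ and $f>0$ on $(\beta,\infty)$; (H4) $K>0$ and $K'$ are continuous on $[R,\infty)$ (for a fixed $R>0$), $\frac{rK'(r)}{K(r)}>-\frac{(N-1)p}{p-1}$ on $[R,\infty)$, and there are constants $K_0,K_1>0$ with $\frac{K_0}{r^{\alpha}}\le K(r)\le \frac{K_1}{r^{\alpha_1}}$ on $[R,\infty)$, where $N+\frac{m(N-p)}{p-1}<\alpha_1\le\alpha<2(N-1)$.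 Notation: $T=R^{\frac{p-N}{p-1}}$ and, for $0<t\le T$, $h(t)=\left(\frac{N-p}{p-1}\right)^{-p}t^{\frac{p(N-1)}{p-N}}K\!\left(t^{\frac{p-1}{p-N}}\right)>0$. A solution of the initial value problem on an interval $[0,d]$ means $v\in C^1[0,d]$ such that $t\mapsto h(t)f(v(t))$ is integrable on $(0,t)$ for each $t\le d$ and $|v'(t)|^{p-2}v'(t)=a^{p-1}-\int_0^t h(s)f(v(s))\,ds$, $v(0)=0$; it exists uniquely on $[0,T]$ for each $a>0$. *)

theory Defs
  imports "HOL-Analysis.Analysis"
begin

definition loc_lipschitz_on :: "real set \<Rightarrow> (real \<Rightarrow> real) \<Rightarrow> bool" where
  "loc_lipschitz_on S g \<longleftrightarrow> (\<forall>C. compact C \<and> C \<subseteq> S \<longrightarrow> (\<exists>L. L-lipschitz_on C g))"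

definition hw :: "nat \<Rightarrow> real \<Rightarrow> (real \<Rightarrow> real) \<Rightarrow> real \<Rightarrow> real" where
  "hw N p K t = ((real N - p) / (p - 1)) powr (-p) * t powr (p * (real N - 1) / (p - real N))
                 * K (t powr ((p - 1) / (p - real N)))"

definition ivp_solution ::
  "nat \<Rightarrow> real \<Rightarrow> (real \<Rightarrow> real) \<Rightarrow> (real \<Rightarrow> real) \<Rightarrow> real \<Rightarrow> real
    \<Rightarrow> (real \<Rightarrow> real) \<Rightarrow> (real \<Rightarrow> real) \<Rightarrow> bool" where
  "ivp_solution N p K f a d v v' \<longleftrightarrow>
     (\<forall>t\<in>{0..d}. (v has_real_derivative v' t) (at t within {0..d})) \<and>
     continuous_on {0..d} v' \<and>
     v 0 = 0 \<and>
     (\<forall>t\<in>{0<..d}. (\<lambda>s. hw N p K s * f (v s)) absolutely_integrable_on {0..t}) \<and>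
     (\<forall>t\<in>{0..d}. \<bar>v' t\<bar> powr (p - 2) * v' t
                  = a powr (p - 1) - integral {0..t} (\<lambda>s. hw N p K s * f (v s)))"

end

theory Submission
  imports Defs
begin

text \<open>Let \<open>G(u) = \<integral>\<^sub>0\<^sup>\<bar>u\<bar> f\<close> and \<open>q = p / (p - 1)\<close>. Along a solution the energy
  \<open>E = \<bar>v'\<bar>\<^sup>p / (q h) + G(v)\<close> has derivative \<open>- h' \<bar>v'\<bar>\<^sup>p / (q h\<^sup>2) \<ge> 0\<close> wherever \<open>v \<noteq> 0\<close>,
  because the hypothesis on \<open>r K'(r) / K(r)\<close> makes the weight \<open>h\<close> nonincreasing; hence a
  positive energy level is never lost. Given \<open>\<Lambda>\<close>, \<open>f \<le> C\<close> on \<open>(0, \<Lambda>]\<close>, so once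
  \<open>a\<^sup>p\<^sup>-\<^sup>1 > C \<integral>\<^sub>0\<^sup>T h\<close> the slope \<open>v'\<close> stays positive while \<open>0 < v \<le> \<Lambda>\<close>, and
  \<open>v\<close> must exceed \<open>\<Lambda>\<close> before any zero \<open>z\<close>. Choosing \<open>\<Lambda>\<close> with \<open>G \<ge> M\<^sub>0\<close> beyond \<open>\<Lambda>\<close>
  (possible since \<open>f\<close> is superlinear) gives
  \<open>\<bar>v'(z)\<bar>\<^sup>p = q h(z) E(z) \<ge> q h(T) M\<^sub>0\<close>.\<close>

section \<open>Signed powers and real calculus\<close>

lemma has_real_derivative_abs_powr:
  fixes q x :: real
  assumes "1 < q"
  shows "((\<lambda>x. \<bar>x\<bar> powr q) has_real_derivative q * (\<bar>x\<bar> powr (q - 2) * x)) (at x)"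
proof (cases "x = 0")
  case True
  have "((\<lambda>y. \<bar>y\<bar> powr (q - 1)) \<longlongrightarrow> 0) (at 0)"
    using assms by (auto intro!: tendsto_eq_intros)
  moreover have "\<forall>\<^sub>F y in at 0. \<bar>y\<bar> powr (q - 1) = norm ((\<bar>y\<bar> powr q - \<bar>0\<bar> powr q) / (y - 0))"
    by (auto simp: eventually_at_filter powr_diff)
  ultimately have "((\<lambda>y. norm ((\<bar>y\<bar> powr q - \<bar>0\<bar> powr q) / (y - 0))) \<longlongrightarrow> 0) (at 0)"
    by (rule Lim_transform_eventually)
  then show ?thesis
    using True by (simp only: has_field_derivative_iff tendsto_norm_zero_iff mult_zero_right)
next
  case False
  have "\<forall>\<^sub>F y in nhds x. \<bar>y\<bar> powr q = (sgn x * y) powr q"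
    unfolding eventually_nhds_metric
    by (rule exI[of _ "\<bar>x\<bar>"]) (use False in \<open>auto simp: dist_real_def sgn_if\<close>)
  moreover have "((\<lambda>y. (sgn x * y) powr q) has_real_derivative q * (sgn x * x) powr (q - 1) * sgn x) (at x)"
    using False by (auto intro!: derivative_eq_intros simp: sgn_if)
  moreover have "(sgn x * x) powr (q - 1) * sgn x = \<bar>x\<bar> powr (q - 2) * x"
    using False by (simp add: sgn_if powr_diff power2_eq_square)
  ultimately show ?thesis
    using DERIV_cong_ev[OF refl] by (metis mult.assoc)
qed

lemma abs_abs_powr_mult: "\<bar>\<bar>x\<bar> powr r * x\<bar> = \<bar>x\<bar> powr (r + 1)" for x r :: real
  by (cases "x = 0") (simp_all add: abs_mult powr_add)

lemma abs_powr_mult_pos_iff: "0 < \<bar>x\<bar> powr r * x \<longleftrightarrow> 0 < x" for x r :: real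
  by (cases "x = 0") (auto simp: zero_less_mult_iff)

lemma abs_powr_mult_inverse:
  fixes p x :: real
  assumes "1 < p"
  shows "\<bar>\<bar>x\<bar> powr (p - 2) * x\<bar> powr (p / (p - 1) - 2) * (\<bar>x\<bar> powr (p - 2) * x) = x"
proof (cases "x = 0")
  case False
  have "(p - 2 + 1) * (p / (p - 1) - 2) = 2 - p"
    using assms by (simp add: field_simps)
  then have "\<bar>\<bar>x\<bar> powr (p - 2) * x\<bar> powr (p / (p - 1) - 2) = \<bar>x\<bar> powr (2 - p)"
    by (simp add: abs_abs_powr_mult powr_powr)
  then show ?thesis
    using False by (simp add: powr_add[symmetric])
qed simp

lemma loc_lipschitz_on_imp_isCont:
  assumes "open S" "loc_lipschitz_on S g" "x \<in> S"
  shows "isCont g x"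
proof -
  obtain e where e: "0 < e" "cball x e \<subseteq> S"
    using assms open_contains_cball by blast
  then obtain L where "L-lipschitz_on (cball x e) g"
    using assms(2) compact_cball unfolding loc_lipschitz_on_def by blast
  then have "continuous_on (cball x e) g"
    by (rule lipschitz_on_continuous_on)
  then show ?thesis
    using e continuous_on_interior[of "cball x e" g x] by auto
qed

lemma has_real_derivative_eventually_nonzero:
  fixes g :: "real \<Rightarrow> real"
  assumes g: "(g has_real_derivative d) (at x)" and nz: "g x \<noteq> 0 \<or> d \<noteq> 0"
  shows "\<forall>\<^sub>F y in at x. g y \<noteq> 0"
proof (cases "g x = 0")
  case True
  have "((\<lambda>y. (g y - g x) / (y - x)) \<longlongrightarrow> d) (at x)"
    using g by (simp add: has_field_derivative_iff)
  then have "\<forall>\<^sub>F y in at x. (g y - g x) / (y - x) \<noteq> 0"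
    using True nz by (intro tendsto_imp_eventually_ne) auto
  then show ?thesis
    by eventually_elim (use True in auto)
next
  case False
  have "(g \<longlongrightarrow> g x) (at x)"
    using DERIV_isCont[OF g] by (simp add: isCont_def)
  then show ?thesis
    using False by (intro tendsto_imp_eventually_ne)
qed

lemma has_real_derivative_integral_interior:
  fixes g :: "real \<Rightarrow> real"
  assumes "g integrable_on {a..b}" "x \<in> {a<..<b}" "isCont g x"
  shows "((\<lambda>u. integral {a..u} g) has_real_derivative g x) (at x)"
proof -
  have "((\<lambda>u. integral {a..u} g) has_vector_derivative g x) (at x within {a..b})"
    using integral_has_vector_derivative_continuous_at[of g a b x "{}"] assms
    by (auto intro: continuous_at_imp_continuous_within)
  moreover have "at x within {a..b} = at x"
    using assms(2) by (intro at_within_interior) auto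
  ultimately show ?thesis
    by (simp add: has_real_derivative_iff_has_vector_derivative)
qed

lemma integral_le_off_left_endpoint:
  fixes g g' :: "real \<Rightarrow> real"
  assumes "g integrable_on {a..b}" "g' integrable_on {a..b}" "\<And>x. a < x \<Longrightarrow> x \<le> b \<Longrightarrow> g x \<le> g' x"
  shows "integral {a..b} g \<le> integral {a..b} g'"
proof -
  define g0 where "g0 x = (if x = a then g' x else g x)" for x
  have "g0 integrable_on {a..b}"
    by (rule integrable_spike[OF assms(1) negligible_sing]) (auto simp: g0_def)
  moreover have "integral {a..b} g = integral {a..b} g0"
    by (rule integral_spike[OF negligible_sing]) (auto simp: g0_def)
  ultimately show ?thesis
    using assms by (auto simp: g0_def intro!: integral_le)
qed

text \<open>No sign condition on \<open>x\<close> is needed: for reals, \<open>x powr s = \<bar>x\<bar> powr s\<close>.\<close>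
lemma less_powr_if_root_less:
  fixes a r x :: real
  assumes "0 < r" "x powr (1 / r) < a"
  shows "x < a powr r"
proof -
  have "(x powr (1 / r)) powr r < a powr r"
    using assms by (intro powr_less_mono2) auto
  then show ?thesis
    using assms(1) by (simp add: powr_powr)
qed

section \<open>The weight\<close>

locale radial_weight =
  fixes N :: nat and p R K1 \<alpha>1 :: real and K K' :: "real \<Rightarrow> real"
  assumes p: "1 < p" "p < real N" and R_pos: "0 < R"
    and K_deriv: "\<forall>r\<in>{R..}. (K has_real_derivative K' r) (at r within {R..})"
    and K_cont: "continuous_on {R..} K"
    and K_pos: "\<forall>r\<in>{R..}. 0 < K r"
    and K_ratio: "\<forall>r\<in>{R..}. - ((real N - 1) * p / (p - 1)) < r * K' r / K r"
    and K_upper: "\<forall>r\<in>{R..}. K r \<le> K1 / r powr \<alpha>1"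
    and \<alpha>1_gt: "real N < \<alpha>1"
begin

definition T :: real where "T = R powr ((p - real N) / (p - 1))"

text \<open>\<open>t \<mapsto> t powr radius_exp\<close> inverts the substitution \<open>t = r powr ((p - N) / (p - 1))\<close>
  between the variable of the ODE and the radius.\<close>
definition radius_exp :: real where "radius_exp = (p - 1) / (p - real N)"
definition weight_exp :: real where "weight_exp = p * (real N - 1) / (p - real N)"
definition weight_const :: real where "weight_const = ((real N - p) / (p - 1)) powr (- p)"

lemma hw_eq: "hw N p K t = weight_const * t powr weight_exp * K (t powr radius_exp)"
  unfolding hw_def weight_const_def weight_exp_def radius_exp_def by simp

lemma radius_exp_neg: "radius_exp < 0"
  unfolding radius_exp_def using p by (simp add: divide_pos_neg)

lemma weight_const_pos: "0 < weight_const"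
  unfolding weight_const_def using p by simp

lemma T_pos: "0 < T"
  unfolding T_def using R_pos by simp

lemma R_le_radius:
  assumes "0 < t" "t \<le> T"
  shows "R \<le> t powr radius_exp" and "t < T \<Longrightarrow> R < t powr radius_exp"
proof -
  have T_radius: "T powr radius_exp = R"
    unfolding T_def radius_exp_def using R_pos p by (simp add: powr_powr)
  show "R \<le> t powr radius_exp"
    using powr_mono2'[OF less_imp_le[OF radius_exp_neg] assms] T_radius by simp
  show "t < T \<Longrightarrow> R < t powr radius_exp"
    using assms radius_exp_neg T_radius by (metis powr_less_mono2_neg)
qed

lemma hw_pos: "t \<in> {0<..T} \<Longrightarrow> 0 < hw N p K t"
  using R_le_radius(1)[of t] K_pos weight_const_pos unfolding hw_eq by simp

lemma hw_continuous_on: "continuous_on {0<..T} (hw N p K)"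
proof -
  have "continuous_on {0<..T} (\<lambda>t. K (t powr radius_exp))"
    by (rule continuous_on_compose2[OF K_cont]) (auto intro!: continuous_intros simp: R_le_radius)
  then show ?thesis
    unfolding hw_eq[abs_def] by (intro continuous_intros) auto
qed

text \<open>The hypothesis on \<open>r K' r / K r\<close> is exactly what makes the weight nonincreasing.\<close>
lemma hw_deriv_nonpos:
  assumes t: "t \<in> {0<..<T}"
  shows "\<exists>d\<le>0. (hw N p K has_real_derivative d) (at t)"
proof -
  define r where "r = t powr radius_exp"
  have r: "R < r" "0 < K r"
    using R_le_radius(2)[of t] t K_pos unfolding r_def by auto
  have "(K has_real_derivative K' r) (at r within {R..})"
    using K_deriv r by auto
  moreover have "at r within {R..} = at r"
    using r by (intro at_within_interior) auto
  ultimately have K_at: "(K has_real_derivative K' r) (at r)"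
    by simp
  define d where "d = weight_const * t powr (weight_exp - 1)
                       * (weight_exp * K r + radius_exp * (r * K' r))"
  have "((\<lambda>t. K (t powr radius_exp)) has_real_derivative K' r * (radius_exp * t powr (radius_exp - 1))) (at t)"
    using DERIV_chain2[of K "K' r" "\<lambda>t. t powr radius_exp" t] K_at has_real_derivative_powr[of t radius_exp] t
    unfolding r_def by auto
  then have "(hw N p K has_real_derivative d) (at t)"
    unfolding hw_eq[abs_def] d_def using t
    by (auto intro!: derivative_eq_intros simp: r_def powr_diff algebra_simps)
  moreover have "weight_exp * K r + radius_exp * (r * K' r) < 0"
  proof -
    have "radius_exp * (r * K' r / K r) < radius_exp * (- ((real N - 1) * p / (p - 1)))"
      using K_ratio r by (intro mult_strict_left_mono_neg radius_exp_neg) auto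
    also have "\<dots> = - weight_exp"
      unfolding radius_exp_def weight_exp_def using p by (simp add: divide_simps)
    finally show ?thesis
      using r by (simp add: field_simps)
  qed
  then have "d \<le> 0"
    unfolding d_def using weight_const_pos t by (intro mult_nonneg_nonpos) auto
  ultimately show ?thesis
    by blast
qed

lemma hw_integrable: "hw N p K integrable_on {0..T}"
proof -
  define e where "e = weight_exp - radius_exp * \<alpha>1"
  have "-1 < e"
  proof -
    have "e = (p * (real N - 1) - (p - 1) * \<alpha>1) / (p - real N)"
      unfolding e_def weight_exp_def radius_exp_def by (simp only: times_divide_eq_left diff_divide_distrib[symmetric])
    moreover have "(p - 1) * real N < (p - 1) * \<alpha>1"
      using p \<alpha>1_gt by simp
    ultimately show ?thesis
      using p by (simp add: neg_less_divide_eq algebra_simps)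
  qed
  have bound: "hw N p K t \<le> weight_const * K1 * t powr e" if "t \<in> {0<..T}" for t
  proof -
    have "K (t powr radius_exp) \<le> K1 / (t powr radius_exp) powr \<alpha>1"
      using K_upper R_le_radius(1)[of t] that by auto
    also have "\<dots> = K1 * t powr (- (radius_exp * \<alpha>1))"
      using that by (simp add: powr_powr powr_minus divide_inverse)
    finally have "hw N p K t \<le> weight_const * t powr weight_exp * (K1 * t powr (- (radius_exp * \<alpha>1)))"
      unfolding hw_eq using weight_const_pos by (intro mult_left_mono) auto
    also have "\<dots> = weight_const * K1 * t powr e"
      unfolding e_def using that by (simp add: powr_add[symmetric] algebra_simps)
    finally show ?thesis .
  qed
  have "hw N p K integrable_on {0<..T}"
  proof (rule measurable_bounded_by_integrable_imp_integrable_real)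
    show "hw N p K \<in> borel_measurable (lebesgue_on {0<..T})"
      using hw_continuous_on by (rule continuous_imp_measurable_on_sets_lebesgue) auto
    show "(\<lambda>t. weight_const * K1 * t powr e) integrable_on {0<..T}"
      using integrable_cmul[OF integrable_on_powr_from_0'[OF \<open>-1 < e\<close>], of T "weight_const * K1"] T_pos
      by simp
    show "\<bar>hw N p K t\<bar> \<le> weight_const * K1 * t powr e" if "t \<in> {0<..T}" for t
      using bound hw_pos that by (simp add: less_imp_le)
  qed auto
  then show ?thesis
    by (rule integrable_spike_set) (auto intro: negligible_subset[of "{0}"])
qed

end

section \<open>The nonlinearity and its even primitive\<close>

lemma integrable_on_0_if_weakly_singular:
  fixes f g :: "real \<Rightarrow> real"
  assumes m: "0 < m" "m < 1" and g: "\<And>u. isCont g u"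
    and near_0: "\<exists>\<delta>>0. \<forall>u. u \<noteq> 0 \<and> \<bar>u\<bar> < \<delta> \<longrightarrow> f u = - 1 / (\<bar>u\<bar> powr (m - 1) * u) + g u"
    and f_cont: "\<And>u. 0 < u \<Longrightarrow> isCont f u" and c: "0 \<le> c"
  shows "f integrable_on {0..c}"
proof -
  obtain \<delta> where \<delta>: "0 < \<delta>" "\<forall>u. u \<noteq> 0 \<and> \<bar>u\<bar> < \<delta> \<longrightarrow> f u = - 1 / (\<bar>u\<bar> powr (m - 1) * u) + g u"
    using near_0 by blast
  define d where "d = \<delta> / 2"
  have d: "0 < d" "d < \<delta>"
    using \<delta> by (auto simp: d_def)
  have "(\<lambda>u. u powr (- m)) integrable_on {0..d}"
    using integrable_on_powr_from_0[of "- m" d] m d by auto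
  moreover have "g integrable_on {0..d}"
    using g by (intro integrable_continuous_interval continuous_at_imp_continuous_on) auto
  ultimately have "(\<lambda>u. - (u powr (- m)) + g u) integrable_on {0..d}"
    by (intro integrable_add integrable_neg)
  then have f_0d: "f integrable_on {0..d}"
  proof (rule integrable_spike[OF _ negligible_sing])
    fix u assume "u \<in> {0..d} - {0}"
    then have "0 < u" "u < \<delta>"
      using d by auto
    then show "f u = - (u powr (- m)) + g u"
      using \<delta>(2) by (simp add: powr_diff powr_minus divide_inverse)
  qed
  show ?thesis
  proof (cases "c \<le> d")
    case True
    then show ?thesis
      using c by (intro integrable_on_subinterval[OF f_0d]) auto
  next
    case False
    have "f integrable_on {d..c}"
      using d f_cont by (intro integrable_continuous_interval continuous_at_imp_continuous_on) auto
    then show ?thesis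
      using Henstock_Kurzweil_Integration.integrable_combine[of 0 d c f] f_0d d False by auto
  qed
qed

lemma ex_upper_bound_if_negative_near_0:
  fixes f :: "real \<Rightarrow> real"
  assumes "0 < \<beta>" "\<forall>u. 0 < u \<and> u < \<beta> \<longrightarrow> f u < 0" "\<And>u. 0 < u \<Longrightarrow> isCont f u"
  shows "\<exists>C\<ge>0. \<forall>u. 0 < u \<and> u \<le> \<Lambda> \<longrightarrow> f u \<le> C"
proof -
  have "compact (f ` {\<beta>..max \<beta> \<Lambda>})"
    using assms by (intro compact_continuous_image continuous_at_imp_continuous_on) auto
  then obtain C where C: "\<forall>y\<in>f ` {\<beta>..max \<beta> \<Lambda>}. norm y \<le> C"
    by (meson bounded_iff compact_imp_bounded)
  have "f u \<le> max C 0" if "0 < u" "u \<le> \<Lambda>" for u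
  proof (cases "u < \<beta>")
    case True
    then show ?thesis
      using assms(2) that by force
  next
    case False
    then have "\<bar>f u\<bar> \<le> C"
      using C that by auto
    then show ?thesis
      by simp
  qed
  then show ?thesis
    by (intro exI[of _ "max C 0"]) auto
qed

lemma eventually_ge_1_if_superlinear:
  fixes f g :: "real \<Rightarrow> real"
  assumes l: "0 < l" and f: "\<exists>U. \<forall>u. U \<le> \<bar>u\<bar> \<longrightarrow> f u = \<bar>u\<bar> powr (l - 1) * u + g u"
    and g: "((\<lambda>u. \<bar>g u\<bar> / \<bar>u\<bar> powr l) \<longlongrightarrow> 0) at_top"
  shows "\<forall>\<^sub>F u in at_top. 1 \<le> f u"
proof -
  obtain U where U: "\<forall>u. U \<le> \<bar>u\<bar> \<longrightarrow> f u = \<bar>u\<bar> powr (l - 1) * u + g u"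
    using f by blast
  have "\<forall>\<^sub>F u in at_top. \<bar>g u\<bar> / \<bar>u\<bar> powr l < 1 / 2"
    using g by (rule order_tendstoD) simp
  moreover have "\<forall>\<^sub>F u in at_top. max U (2 powr (1 / l)) \<le> u \<and> 0 < u"
    by (intro eventually_conj eventually_ge_at_top eventually_gt_at_top)
  ultimately show ?thesis
  proof eventually_elim
    case (elim u)
    then have "f u = u powr l + g u" "\<bar>g u\<bar> < u powr l / 2"
      using U by (auto simp: powr_diff field_simps)
    moreover have "(2 powr (1 / l)) powr l \<le> u powr l"
      using elim l by (intro powr_mono2) auto
    then have "2 \<le> u powr l"
      using l by (simp add: powr_powr)
    ultimately show ?case
      by linarith
  qed
qed

definition even_primitive :: "(real \<Rightarrow> real) \<Rightarrow> real \<Rightarrow> real" where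
  "even_primitive f u = integral {0..\<bar>u\<bar>} f"

lemma even_primitive_0 [simp]: "even_primitive f 0 = 0"
  by (simp add: even_primitive_def)

lemma isCont_even_primitive:
  assumes "\<And>c. 0 \<le> c \<Longrightarrow> f integrable_on {0..c}"
  shows "isCont (even_primitive f) u"
proof -
  have "continuous_on {0..\<bar>u\<bar> + 1} (\<lambda>x. integral {0..x} f)"
    using assms by (intro indefinite_integral_continuous_1) auto
  then have "continuous_on {- (\<bar>u\<bar> + 1)..\<bar>u\<bar> + 1} (even_primitive f)"
    unfolding even_primitive_def[abs_def]
    by (rule continuous_on_compose2[of _ _ _ abs]) (auto intro!: continuous_intros)
  then show ?thesis
    by (rule continuous_on_interior) auto
qed

lemma even_primitive_has_derivative:
  assumes odd: "\<forall>u. u \<noteq> 0 \<longrightarrow> f (- u) = - f u" and cont: "\<And>u. u \<noteq> 0 \<Longrightarrow> isCont f u"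
    and int: "\<And>c. 0 \<le> c \<Longrightarrow> f integrable_on {0..c}" and "u \<noteq> 0"
  shows "(even_primitive f has_real_derivative f u) (at u)"
proof -
  have F: "((\<lambda>x. integral {0..x} f) has_real_derivative f x) (at x)" if "0 < x" for x
    using that int[of "2 * x"] cont[of x] by (intro has_real_derivative_integral_interior) auto
  consider "0 < u" | "u < 0"
    using \<open>u \<noteq> 0\<close> by linarith
  then show ?thesis
  proof cases
    case 1
    show ?thesis
      by (rule has_field_derivative_transform_within_open[OF F[OF 1], of "{0<..}"])
         (use 1 in \<open>auto simp: even_primitive_def\<close>)
  next
    case 2
    have "((\<lambda>x. integral {0..- x} f) has_real_derivative f (- u) * - 1) (at u)"
      using F[of "- u"] 2
      by (intro DERIV_chain2[where f = "\<lambda>x. integral {0..x} f" and g = uminus]) (auto intro!: derivative_eq_intros)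
    then have "((\<lambda>x. integral {0..- x} f) has_real_derivative f u) (at u)"
      using odd 2 by simp
    then show ?thesis
      by (rule has_field_derivative_transform_within_open[of _ _ _ "{..<0}"])
         (use 2 in \<open>auto simp: even_primitive_def\<close>)
  qed
qed

lemma filterlim_even_primitive_at_top:
  assumes int: "\<And>c. 0 \<le> c \<Longrightarrow> f integrable_on {0..c}" and ge_1: "\<forall>\<^sub>F u in at_top. 1 \<le> f u"
  shows "filterlim (even_primitive f) at_top at_top"
proof -
  obtain U where U: "0 \<le> U" "\<forall>u\<ge>U. 1 \<le> f u"
    using ge_1 unfolding eventually_at_top_linorder by (metis max.cobounded2 max.boundedE)
  have "u + (even_primitive f U - U) \<le> even_primitive f u" if "U \<le> u" for u
  proof -
    have "even_primitive f u = integral {0..U} f + integral {U..u} f"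
      unfolding even_primitive_def using U that int[of u]
      by (simp add: Henstock_Kurzweil_Integration.integral_combine)
    moreover have "integral {U..u} (\<lambda>_. 1) \<le> integral {U..u} f"
      using U that by (intro integral_le integrable_subinterval_real[OF int[of u]]) auto
    ultimately show ?thesis
      using U that by (simp add: even_primitive_def)
  qed
  then show ?thesis
    by (intro filterlim_at_top_mono[OF filterlim_tendsto_add_at_top[OF tendsto_const filterlim_ident]])
       (auto simp: eventually_at_top_linorder add.commute)
qed

section \<open>Energy of a solution\<close>

locale plaplace_solution =
  fixes p T a :: real and h f G v v' :: "real \<Rightarrow> real"
  assumes p_gt_1: "1 < p" and T_pos: "0 < T" and a_pos: "0 < a"
    and h_pos: "\<And>t. t \<in> {0<..T} \<Longrightarrow> 0 < h t" \<comment> \<open>nothing is assumed about \<open>h 0\<close> or \<open>f 0\<close>\<close>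
    and h_cont: "continuous_on {0<..T} h"
    and h_deriv: "\<And>t. t \<in> {0<..<T} \<Longrightarrow> \<exists>d\<le>0. (h has_real_derivative d) (at t)"
    and h_integrable: "h integrable_on {0..T}"
    and f_cont: "\<And>u. u \<noteq> 0 \<Longrightarrow> isCont f u"
    and G_deriv: "\<And>u. u \<noteq> 0 \<Longrightarrow> (G has_real_derivative f u) (at u)"
    and G_cont: "\<And>u. isCont G u"
    and G_0: "G 0 = 0"
    and v_deriv: "\<And>t. t \<in> {0..T} \<Longrightarrow> (v has_real_derivative v' t) (at t within {0..T})"
    and v_0: "v 0 = 0"
    and hfv_integrable: "(\<lambda>s. h s * f (v s)) integrable_on {0..T}"
    and v'_eq: "\<And>t. t \<in> {0..T} \<Longrightarrow>
       \<bar>v' t\<bar> powr (p - 2) * v' t = a powr (p - 1) - integral {0..t} (\<lambda>s. h s * f (v s))"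
begin

definition q :: real where "q = p / (p - 1)"

text \<open>\<open>phi t = \<bar>v' t\<bar> powr (p - 2) * v' t\<close> (see \<open>phi_eq\<close>); defining it through the integral
  equation makes it differentiable wherever \<open>v \<noteq> 0\<close>.\<close>
definition phi :: "real \<Rightarrow> real" where
  "phi t = a powr (p - 1) - integral {0..t} (\<lambda>s. h s * f (v s))"

definition energy :: "real \<Rightarrow> real" where
  "energy t = \<bar>phi t\<bar> powr q / (q * h t) + G (v t)"

lemma q_gt_1: "1 < q"
  unfolding q_def using p_gt_1 by simp

lemma v_has_derivative_at: "t \<in> {0<..<T} \<Longrightarrow> (v has_real_derivative v' t) (at t)"
  using v_deriv[of t] at_within_interior[of t "{0..T}"] by auto

lemma v_continuous_on: "continuous_on {0..T} v"
  unfolding continuous_on_eq_continuous_within using v_deriv DERIV_continuous by blast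

lemma phi_eq: "t \<in> {0..T} \<Longrightarrow> phi t = \<bar>v' t\<bar> powr (p - 2) * v' t"
  using v'_eq by (simp add: phi_def)

lemma v'_eq_phi: "t \<in> {0..T} \<Longrightarrow> v' t = \<bar>phi t\<bar> powr (q - 2) * phi t"
  using abs_powr_mult_inverse[OF p_gt_1, of "v' t"] by (simp add: phi_eq q_def)

lemma abs_phi_powr_q: "t \<in> {0..T} \<Longrightarrow> \<bar>phi t\<bar> powr q = \<bar>v' t\<bar> powr p"
  using p_gt_1 by (simp add: phi_eq abs_abs_powr_mult powr_powr q_def)

lemma phi_has_derivative:
  assumes t: "t \<in> {0<..<T}" "v t \<noteq> 0"
  shows "(phi has_real_derivative - (h t * f (v t))) (at t)"
proof -
  have "isCont h t"
    using h_cont t by (intro continuous_on_interior[of "{0<..T}"]) auto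
  moreover have "isCont (\<lambda>s. f (v s)) t"
    by (rule isCont_o2[OF DERIV_isCont[OF v_has_derivative_at[OF t(1)]] f_cont[OF t(2)]])
  ultimately have "((\<lambda>u. integral {0..u} (\<lambda>s. h s * f (v s))) has_real_derivative h t * f (v t)) (at t)"
    using t by (intro has_real_derivative_integral_interior[OF hfv_integrable] continuous_intros) auto
  then show ?thesis
    unfolding phi_def[abs_def] by (auto intro!: derivative_eq_intros)
qed

lemma phi_continuous_on: "continuous_on {0..T} phi"
  unfolding phi_def[abs_def]
  by (intro continuous_intros indefinite_integral_continuous_1 hfv_integrable)

lemma h_antimono:
  assumes "0 < s" "s \<le> t" "t \<le> T"
  shows "h t \<le> h s"
proof -
  have "- h s \<le> - h t"
  proof (rule DERIV_nonneg_imp_increasing_open[OF assms(2)])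
    fix x assume "s < x" "x < t"
    then obtain d where "(h has_real_derivative d) (at x)" "d \<le> 0"
      using h_deriv[of x] assms by auto
    then show "\<exists>y. ((\<lambda>x. - h x) has_real_derivative y) (at x) \<and> 0 \<le> y"
      by (intro exI[of _ "- d"]) (auto intro: derivative_eq_intros)
  next
    show "continuous_on {s..t} (\<lambda>x. - h x)"
      using assms by (intro continuous_intros continuous_on_subset[OF h_cont]) auto
  qed
  then show ?thesis
    by simp
qed

text \<open>The derivative of the energy is \<open>- h' \<bar>phi\<bar>\<^sup>q / (q h\<^sup>2)\<close>: the terms containing \<open>f (v t)\<close> cancel.\<close>
lemma energy_has_derivative_nonneg:
  assumes t: "t \<in> {0<..<T}" "v t \<noteq> 0"
  shows "\<exists>d\<ge>0. (energy has_real_derivative d) (at t)"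
proof -
  obtain h' where h': "(h has_real_derivative h') (at t)" "h' \<le> 0"
    using h_deriv t by blast
  have ht: "0 < h t"
    using h_pos t by auto
  have "((\<lambda>s. \<bar>phi s\<bar> powr q) has_real_derivative q * v' t * - (h t * f (v t))) (at t)"
    using DERIV_chain2[OF has_real_derivative_abs_powr[OF q_gt_1] phi_has_derivative[OF t]]
      v'_eq_phi[of t] t by (simp add: mult.assoc)
  then have "((\<lambda>s. \<bar>phi s\<bar> powr q / (q * h s)) has_real_derivative
      (q * v' t * - (h t * f (v t)) * (q * h t) - \<bar>phi t\<bar> powr q * (q * h'))
        / ((q * h t) * (q * h t))) (at t)"
    using DERIV_cmult[OF h'(1), of q] ht q_gt_1 by (intro DERIV_divide) auto
  then have "(energy has_real_derivative
      (q * v' t * - (h t * f (v t)) * (q * h t) - \<bar>phi t\<bar> powr q * (q * h'))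
        / ((q * h t) * (q * h t)) + f (v t) * v' t) (at t)"
    unfolding energy_def[abs_def]
    by (intro DERIV_add DERIV_chain2[OF G_deriv[OF t(2)] v_has_derivative_at[OF t(1)]])
  moreover have "(q * v' t * - (h t * f (v t)) * (q * h t) - \<bar>phi t\<bar> powr q * (q * h'))
        / ((q * h t) * (q * h t)) + f (v t) * v' t = \<bar>phi t\<bar> powr q * - h' / (q * (h t * h t))"
    using ht q_gt_1 by (simp add: field_simps)
  moreover have "0 \<le> \<bar>phi t\<bar> powr q * - h' / (q * (h t * h t))"
    using h'(2) q_gt_1 ht by (intro divide_nonneg_pos mult_nonneg_nonneg) auto
  ultimately show ?thesis
    by metis
qed

lemma energy_continuous_on: "continuous_on {0<..<T} energy"
proof -
  have "continuous_on UNIV (\<lambda>x. \<bar>x\<bar> powr q)"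
    using DERIV_isCont[OF has_real_derivative_abs_powr[OF q_gt_1]]
    by (simp add: continuous_at_imp_continuous_on)
  then have "continuous_on {0<..<T} (\<lambda>t. \<bar>phi t\<bar> powr q)"
    by (rule continuous_on_compose2[OF _ continuous_on_subset[OF phi_continuous_on]]) auto
  moreover have "continuous_on {0<..<T} (\<lambda>t. q * h t)"
    by (intro continuous_on_mult_left continuous_on_subset[OF h_cont]) auto
  ultimately have "continuous_on {0<..<T} (\<lambda>t. \<bar>phi t\<bar> powr q / (q * h t))"
    using h_pos q_gt_1 by (intro continuous_on_divide) (auto simp: less_imp_neq[symmetric])
  moreover have "continuous_on UNIV G"
    using G_cont by (simp add: continuous_at_imp_continuous_on)
  then have "continuous_on {0<..<T} (\<lambda>t. G (v t))"
    by (rule continuous_on_compose2[OF _ continuous_on_subset[OF v_continuous_on]]) auto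
  ultimately show ?thesis
    unfolding energy_def[abs_def] by (rule continuous_on_add)
qed

lemma energy_at_zero:
  "t \<in> {0<..<T} \<Longrightarrow> v t = 0 \<Longrightarrow> energy t = \<bar>v' t\<bar> powr p / (q * h t)"
  by (simp add: energy_def abs_phi_powr_q G_0)

lemma G_le_energy: "t \<in> {0<..<T} \<Longrightarrow> G (v t) \<le> energy t"
  using h_pos[of t] q_gt_1 by (simp add: energy_def)

lemma energy_nondecreasing_right:
  assumes u: "u \<in> {0<..<T}" "v u \<noteq> 0 \<or> v' u \<noteq> 0"
  shows "\<exists>b>u. b < T \<and> (\<forall>s\<in>{u..b}. energy u \<le> energy s)"
proof -
  obtain d where d: "0 < d" "\<forall>s. s \<noteq> u \<and> dist s u < d \<longrightarrow> v s \<noteq> 0"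
    using has_real_derivative_eventually_nonzero[OF v_has_derivative_at[OF u(1)] u(2)]
    unfolding eventually_at by auto
  define b where "b = min (u + d / 2) ((u + T) / 2)"
  have b: "u < b" "b < T" "b < u + d"
    using u d by (auto simp: b_def min_def)
  have "energy u \<le> energy s" if s: "s \<in> {u..b}" for s
  proof (rule DERIV_nonneg_imp_increasing_open[of u s energy])
    show "u \<le> s"
      using s by simp
  next
    fix x assume x: "u < x" "x < s"
    then have "v x \<noteq> 0"
      using d(2) s b by (auto simp: dist_real_def)
    then show "\<exists>y. (energy has_real_derivative y) (at x) \<and> 0 \<le> y"
      using energy_has_derivative_nonneg[of x] x s b u by fastforce
  next
    show "continuous_on {u..s} energy"
      using s b u by (intro continuous_on_subset[OF energy_continuous_on]) auto
  qed
  then show ?thesis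
    using b by blast
qed

text \<open>A point where \<open>v\<close> and \<open>v'\<close> both vanish has zero energy; away from such points the energy
  can only increase, so a positive energy level, once reached, is never left.\<close>
lemma energy_mono:
  assumes st: "0 < s" "s \<le> t" "t < T" and pos: "0 < energy s"
  shows "energy s \<le> energy t"
proof (rule ccontr)
  assume "\<not> energy s \<le> energy t"
  define B where "B = {r \<in> {s..t}. energy r < energy s}"
  define r0 where "r0 = Inf B"
  have "t \<in> B"
    using \<open>\<not> energy s \<le> energy t\<close> st by (auto simp: B_def)
  have bdd: "bdd_below B"
    by (rule bdd_belowI[of _ s]) (auto simp: B_def)
  have "s \<le> r0"
    unfolding r0_def using \<open>t \<in> B\<close> by (intro cInf_greatest) (auto simp: B_def)
  have "r0 \<le> t"
    unfolding r0_def using \<open>t \<in> B\<close> bdd by (rule cInf_lower)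
  have before_r0: "energy s \<le> energy r" if "s \<le> r" "r < r0" for r
  proof (rule ccontr)
    assume "\<not> energy s \<le> energy r"
    then have "r \<in> B"
      using that \<open>r0 \<le> t\<close> by (auto simp: B_def)
    then have "r0 \<le> r"
      unfolding r0_def using bdd by (rule cInf_lower)
    then show False
      using that by simp
  qed
  have at_r0: "energy s \<le> energy r0"
  proof (cases "r0 = s")
    case False
    then have "s < r0"
      using \<open>s \<le> r0\<close> by simp
    have "isCont energy r0"
      using \<open>s < r0\<close> \<open>r0 \<le> t\<close> st by (intro continuous_on_interior[OF energy_continuous_on]) auto
    then have "(energy \<longlongrightarrow> energy r0) (at_left r0)"
      by (simp add: isCont_def filterlim_at_split)
    moreover have "\<forall>\<^sub>F r in at_left r0. energy s \<le> energy r"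
      using eventually_at_left_real[OF \<open>s < r0\<close>] by eventually_elim (auto intro: before_r0)
    ultimately show ?thesis
      by (rule tendsto_lowerbound) simp
  qed simp
  then have "v r0 \<noteq> 0 \<or> v' r0 \<noteq> 0"
    using pos energy_at_zero[of r0] st \<open>s \<le> r0\<close> \<open>r0 \<le> t\<close> p_gt_1 by auto
  then obtain b where b: "r0 < b" "\<forall>r\<in>{r0..b}. energy r0 \<le> energy r"
    using energy_nondecreasing_right[of r0] st \<open>s \<le> r0\<close> \<open>r0 \<le> t\<close> by auto
  have "b \<le> r0"
    unfolding r0_def
  proof (rule cInf_greatest)
    show "B \<noteq> {}"
      using \<open>t \<in> B\<close> by blast
  next
    fix r assume r: "r \<in> B"
    then have "r0 \<le> r"
      unfolding r0_def using bdd by (rule cInf_lower)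
    show "b \<le> r"
    proof (rule ccontr)
      assume "\<not> b \<le> r"
      then have "energy r0 \<le> energy r"
        using b \<open>r0 \<le> r\<close> by auto
      then show False
        using r at_r0 by (auto simp: B_def)
    qed
  qed
  then show False
    using b by simp
qed

lemma integral_h_le: "t \<in> {0..T} \<Longrightarrow> integral {0..t} h \<le> integral {0..T} h"
proof -
  assume t: "t \<in> {0..T}"
  have "integral {t..T} (\<lambda>_. 0) \<le> integral {t..T} h"
    using t h_pos
    by (intro integral_le_off_left_endpoint integrable_0 integrable_subinterval_real[OF h_integrable])
       (auto simp: less_imp_le)
  then show ?thesis
    using Henstock_Kurzweil_Integration.integral_combine[OF _ _ h_integrable, of t] t by simp
qed

lemma v'_pos_while_small:
  assumes t: "t \<in> {0..T}" and small: "\<forall>s\<in>{0<..t}. 0 < v s \<and> v s \<le> \<Lambda>"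
    and C: "\<forall>u. 0 < u \<and> u \<le> \<Lambda> \<longrightarrow> f u \<le> C" "0 \<le> C"
    and a_large: "C * integral {0..T} h < a powr (p - 1)"
  shows "0 < v' t"
proof -
  have "integral {0..t} (\<lambda>s. h s * f (v s)) \<le> integral {0..t} (\<lambda>s. C * h s)"
  proof (rule integral_le_off_left_endpoint)
    show "(\<lambda>s. h s * f (v s)) integrable_on {0..t}"
      using t by (auto intro: integrable_subinterval_real[OF hfv_integrable])
    show "(\<lambda>s. C * h s) integrable_on {0..t}"
      using t integrable_on_cmult_left[OF integrable_subinterval_real[OF h_integrable], of 0 t C] by auto
  next
    fix s assume "0 < s" "s \<le> t"
    then have "0 < h s" "f (v s) \<le> C"
      using t h_pos small C(1) by auto
    then show "h s * f (v s) \<le> C * h s"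
      by (simp add: mult.commute)
  qed
  also have "\<dots> = C * integral {0..t} h"
    by simp
  also have "\<dots> \<le> C * integral {0..T} h"
    using integral_h_le[OF t] C(2) by (rule mult_left_mono)
  finally have "0 < phi t"
    using a_large by (simp add: phi_def)
  then show ?thesis
    using phi_eq[OF t] abs_powr_mult_pos_iff by simp
qed

lemma exceeds_before_zero:
  assumes z: "z \<in> {0<..<T}" "v z = 0"
    and C: "\<forall>u. 0 < u \<and> u \<le> \<Lambda> \<longrightarrow> f u \<le> C" "0 \<le> C"
    and a_large: "C * integral {0..T} h < a powr (p - 1)"
  shows "\<exists>t\<in>{0<..z}. \<Lambda> < v t"
proof (rule ccontr)
  assume "\<not> ?thesis"
  then have below: "\<forall>t\<in>{0<..z}. v t \<le> \<Lambda>"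
    by (auto simp: not_less)
  have "0 < phi 0"
    using a_pos by (simp add: phi_def)
  then have "0 < v' 0"
    using phi_eq[of 0] T_pos abs_powr_mult_pos_iff by auto
  then obtain d where d: "0 < d" "\<forall>s>0. s \<in> {0..T} \<longrightarrow> s < d \<longrightarrow> v 0 < v s"
    using has_real_derivative_pos_inc_right[OF v_deriv[of 0]] T_pos by auto
  define \<eta> where "\<eta> = min (d / 2) (z / 2)"
  have \<eta>: "0 < \<eta>" "\<eta> < z" and pos_\<eta>: "\<forall>s\<in>{0<..\<eta>}. 0 < v s"
    using d z v_0 by (auto simp: \<eta>_def)
  define Z where "Z = {\<eta>..z} \<inter> v -` {..0}"
  define z1 where "z1 = Inf Z"
  have "closed Z"
    unfolding Z_def using \<eta> z
    by (intro continuous_closed_preimage continuous_on_subset[OF v_continuous_on]) auto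
  moreover have "z \<in> Z" "bdd_below Z"
    using \<eta> z by (auto simp: Z_def)
  ultimately have "z1 \<in> Z"
    unfolding z1_def by (intro closed_contains_Inf) auto
  then have z1: "\<eta> \<le> z1" "z1 \<le> z" "v z1 \<le> 0"
    by (auto simp: Z_def)
  have pos: "0 < v s" if "0 < s" "s < z1" for s
  proof (cases "s \<le> \<eta>")
    case False
    have "s \<notin> Z"
      using cInf_lower[of s Z] \<open>bdd_below Z\<close> that unfolding z1_def by force
    then show ?thesis
      using False that z1 by (auto simp: Z_def)
  qed (use pos_\<eta> that in auto)
  have "v 0 < v z1"
  proof (rule DERIV_pos_imp_increasing_open[of 0 z1 v])
    show "0 < z1"
      using \<eta> z1 by simp
  next
    fix x assume x: "0 < x" "x < z1"
    have "0 < v' x"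
      using x z z1 below pos by (intro v'_pos_while_small[OF _ _ C a_large]) auto
    then show "\<exists>y. (v has_real_derivative y) (at x) \<and> 0 < y"
      using v_has_derivative_at[of x] x z z1 by auto
  next
    show "continuous_on {0..z1} v"
      using z z1 by (intro continuous_on_subset[OF v_continuous_on]) auto
  qed
  then show False
    using v_0 z1 by simp
qed

lemma slope_at_zero_lower_bound:
  assumes z: "z \<in> {0<..<T}" "v z = 0"
    and C: "\<forall>u. 0 < u \<and> u \<le> \<Lambda> \<longrightarrow> f u \<le> C" "0 \<le> C"
    and a_large: "C * integral {0..T} h < a powr (p - 1)"
    and G_large: "\<forall>u\<ge>\<Lambda>. M \<le> G u" and M: "0 < M"
  shows "q * h T * M \<le> \<bar>v' z\<bar> powr p"
proof -
  obtain t where t: "t \<in> {0<..z}" "\<Lambda> < v t"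
    using exceeds_before_zero[OF z C a_large] by blast
  have "M \<le> G (v t)"
    using G_large t(2) by auto
  also have "\<dots> \<le> energy t"
    using G_le_energy[of t] t z by auto
  also have "\<dots> \<le> energy z"
    using energy_mono[of t z] t z M calculation by auto
  also have "\<dots> = \<bar>v' z\<bar> powr p / (q * h z)"
    by (rule energy_at_zero[OF z])
  finally have "q * h z * M \<le> \<bar>v' z\<bar> powr p"
    using h_pos[of z] q_gt_1 z by (simp add: field_simps)
  moreover have "q * h T * M \<le> q * h z * M"
    using h_antimono[of z T] q_gt_1 M z by (intro mult_right_mono mult_left_mono) auto
  ultimately show ?thesis
    by linarith
qed

end

lemma (in radial_weight) ivp_solution_imp_plaplace_solution:
  assumes f_odd: "\<forall>u. u \<noteq> 0 \<longrightarrow> f (- u) = - f u" and f_cont: "\<And>u. u \<noteq> 0 \<Longrightarrow> isCont f u"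
    and f_int: "\<And>c. 0 \<le> c \<Longrightarrow> f integrable_on {0..c}"
    and a: "0 < a" and sol: "ivp_solution N p K f a T v v'"
  shows "plaplace_solution p T a (hw N p K) f (even_primitive f) v v'"
proof unfold_locales
  show "(\<lambda>s. hw N p K s * f (v s)) integrable_on {0..T}"
    using sol T_pos unfolding ivp_solution_def absolutely_integrable_on_def by auto
qed (use p(1) T_pos a hw_pos hw_continuous_on hw_deriv_nonpos hw_integrable f_cont
         even_primitive_has_derivative[OF f_odd f_cont f_int] isCont_even_primitive[OF f_int] sol
       in \<open>auto simp: ivp_solution_def\<close>)

lemma (in radial_weight) large_slope_at_zeros:
  assumes f_odd: "\<forall>u. u \<noteq> 0 \<longrightarrow> f (- u) = - f u" and f_cont: "\<And>u. u \<noteq> 0 \<Longrightarrow> isCont f u"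
    and f_int: "\<And>c. 0 \<le> c \<Longrightarrow> f integrable_on {0..c}"
    and f_bounded: "\<And>\<Lambda>. \<exists>C\<ge>0. \<forall>u. 0 < u \<and> u \<le> \<Lambda> \<longrightarrow> f u \<le> C"
    and G_at_top: "filterlim (even_primitive f) at_top at_top"
    and sol: "\<forall>a>0. ivp_solution N p K f a T (v a) (v' a)"
  shows "\<exists>A. \<forall>a>A. \<forall>z\<in>{0<..<T}. v a z = 0 \<longrightarrow> M < \<bar>v' a z\<bar>"
proof -
  \<comment> \<open>\<open>M0\<close> makes \<open>q * h T * M0 = (\<bar>M\<bar> + 1) powr p\<close>; the threshold \<open>A\<close> makes \<open>C * \<integral>\<^sub>0\<^sup>T h < a powr (p - 1)\<close>.\<close>
  define M0 where "M0 = (\<bar>M\<bar> + 1) powr p / (p / (p - 1) * hw N p K T)"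
  have "0 < M0"
    using hw_pos[of T] T_pos p by (simp add: M0_def)
  obtain \<Lambda> where \<Lambda>: "\<forall>u\<ge>\<Lambda>. M0 \<le> even_primitive f u"
    using G_at_top unfolding filterlim_at_top eventually_at_top_linorder by blast
  obtain C where C: "0 \<le> C" "\<forall>u. 0 < u \<and> u \<le> \<Lambda> \<longrightarrow> f u \<le> C"
    using f_bounded by blast
  show ?thesis
  proof (intro exI[of _ "(C * integral {0..T} (hw N p K)) powr (1 / (p - 1))"] allI impI ballI)
    fix a z assume a: "(C * integral {0..T} (hw N p K)) powr (1 / (p - 1)) < a"
      and z: "z \<in> {0<..<T}" "v a z = 0"
    have "0 < a"
      using a by (smt (verit) powr_ge_zero)
    then interpret plaplace_solution p T a "hw N p K" f "even_primitive f" "v a" "v' a"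
      using sol by (intro ivp_solution_imp_plaplace_solution f_odd f_cont f_int) auto
    have "q * hw N p K T * M0 \<le> \<bar>v' a z\<bar> powr p"
      using z C less_powr_if_root_less[OF _ a] p \<Lambda> \<open>0 < M0\<close>
      by (intro slope_at_zero_lower_bound) auto
    then have "(\<bar>M\<bar> + 1) powr p \<le> \<bar>v' a z\<bar> powr p"
      using hw_pos[of T] T_pos p by (simp add: M0_def q_def)
    then have "\<bar>M\<bar> + 1 \<le> \<bar>v' a z\<bar>"
      using powr_less_mono2[of p "\<bar>v' a z\<bar>" "\<bar>M\<bar> + 1"] p by force
    then show "M < \<bar>v' a z\<bar>"
      by linarith
  qed
qed

theorem lemma2p7:
  fixes N :: nat and p l m \<beta> R K0 K1 \<alpha> \<alpha>1 :: real
    and f g1 g2 K K' :: "real \<Rightarrow> real"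
    and v v' :: "real \<Rightarrow> real \<Rightarrow> real"
  assumes N: "N > 2" and p: "1 < p" "p < real N"
    and f_odd: "\<forall>u. u \<noteq> 0 \<longrightarrow> f (- u) = - f u"
    and f_lip: "loc_lipschitz_on (UNIV - {0}) f"
    \<comment> \<open>(H1)\<close>
    and H1_g1: "loc_lipschitz_on UNIV g1" and H1_l: "l > p - 1"
    and H1_eq: "\<exists>U. \<forall>u. \<bar>u\<bar> \<ge> U \<longrightarrow> f u = \<bar>u\<bar> powr (l - 1) * u + g1 u"
    and H1_lim: "((\<lambda>u. \<bar>g1 u\<bar> / \<bar>u\<bar> powr l) \<longlongrightarrow> 0) at_top"
    \<comment> \<open>(H2)\<close>
    and H2_g2: "loc_lipschitz_on UNIV g2" "g2 0 = 0" and H2_m: "0 < m" "m < 1"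
    and H2_eq: "\<exists>\<delta>>0. \<forall>u. u \<noteq> 0 \<and> \<bar>u\<bar> < \<delta> \<longrightarrow>
                   f u = - 1 / (\<bar>u\<bar> powr (m - 1) * u) + g2 u"
    \<comment> \<open>(H3)\<close>
    and H3: "\<beta> > 0" "f \<beta> = 0" "\<forall>u>0. f u = 0 \<longrightarrow> u = \<beta>"
            "\<forall>u. 0 < u \<and> u < \<beta> \<longrightarrow> f u < 0" "\<forall>u>\<beta>. f u > 0"
    \<comment> \<open>(H4)\<close>
    and R: "R > 0"
    and K_deriv: "\<forall>r\<in>{R..}. (K has_real_derivative K' r) (at r within {R..})"
    and K_cont: "continuous_on {R..} K" "continuous_on {R..} K'"
    and K_pos: "\<forall>r\<in>{R..}. K r > 0"
    and K_ratio: "\<forall>r\<in>{R..}. r * K' r / K r > - ((real N - 1) * p / (p - 1))"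
    and K_bounds: "K0 > 0" "K1 > 0"
        "\<forall>r\<in>{R..}. K0 / r powr \<alpha> \<le> K r \<and> K r \<le> K1 / r powr \<alpha>1"
    and alphas: "real N + m * (real N - p) / (p - 1) < \<alpha>1" "\<alpha>1 \<le> \<alpha>"
                "\<alpha> < 2 * (real N - 1)"
    \<comment> \<open>v a is the solution with initial slope a, v' a its derivative\<close>
    and sol: "\<forall>a>0. ivp_solution N p K f a (R powr ((p - real N) / (p - 1))) (v a) (v' a)"
  shows "\<forall>M. \<exists>A. \<forall>a>A. \<forall>z\<in>{0<..<R powr ((p - real N) / (p - 1))}.
            v a z = 0 \<longrightarrow> \<bar>v' a z\<bar> > M"
proof -
  have "real N < \<alpha>1"
    using alphas(1) H2_m p by (smt (verit) divide_nonneg_pos mult_nonneg_nonneg)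
  then interpret radial_weight N p R K1 \<alpha>1 K K'
    using p R K_deriv K_cont(1) K_pos K_ratio K_bounds(3) by unfold_locales auto
  have f_cont: "isCont f u" if "u \<noteq> 0" for u
    using loc_lipschitz_on_imp_isCont[OF _ f_lip] that by auto
  have f_int: "f integrable_on {0..c}" if "0 \<le> c" for c
    using integrable_on_0_if_weakly_singular[OF H2_m _ H2_eq _ that] f_cont
      loc_lipschitz_on_imp_isCont[OF _ H2_g2(1)] by auto
  have "filterlim (even_primitive f) at_top at_top"
    using f_int H1_l p
    by (intro filterlim_even_primitive_at_top eventually_ge_1_if_superlinear[OF _ H1_eq H1_lim]) auto
  then show ?thesis
    using large_slope_at_zeros[OF f_odd f_cont f_int ex_upper_bound_if_negative_near_0[OF H3(1) H3(4) f_cont]]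
      sol by (simp add: T_def)
qed

end
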